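(* Let $u=0$, $\theta=1$ and $m\in\mathbb N$. If $y_1<y_2<0$, then $D_{y_1}\subseteq D_{y_2}$.
   Context: With $u=0$, $\theta=1$ and $m\in\mathbb N$ fixed, for $y<0$ let $D_y$ be the set of $\mu\in\mathbb C$ such that every root $\xi$ of the polynomial equation $\xi^{m+1}-\xi^m=y\,\xi^{m+1}-y\mu\,\xi$ satisfies $|\xi|<1$. *)

theory Defs
  imports Complex_Main
begin

definition D :: "nat \<Rightarrow> real \<Rightarrow> complex set" where
  "D m y = {\<mu>. \<forall>\<xi>::complex.
      \<xi> ^ (m + 1) - \<xi> ^ m = complex_of_real y * \<xi> ^ (m + 1) - complex_of_real y * \<mu> * \<xi>
      \<longrightarrow> cmod \<xi> < 1}"

end

theory Submission
  imports Defs "HOL-Complex_Analysis.Conformal_Mappings"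
begin

(* Dividing the characteristic equation by \<xi> removes the root 0, which is harmless, and leaves
   (1 - y) \<xi>^m - \<xi>^(m-1) + y \<mu> = 0, which can be solved for the parameter:
   y = Y(\<xi>) := \<xi>^(m-1) (1 - \<xi>) / (\<mu> - \<xi>^m)  (root_parameter m \<mu>).  Thus \<mu> \<notin> D_y means that
   Y takes the value y somewhere in |\<xi>| \<ge> 1.  Apart from the trivial case \<mu> = 1, where \<xi> = 1 is
   a root for every y, such a point has \<xi> \<noteq> 1, and there Re (cnj \<xi> / Y'(\<xi>)) < 0.  By the
   holomorphic inverse function theorem the preimages of slightly smaller parameters therefore
   lie strictly further out, so the set of y with \<mu> \<notin> D_y is open to the left.  A root bound
   makes it closed, and a continuity argument on [y1, y2] carries \<mu> \<notin> D_y2 down to \<mu> \<notin> D_y1. *)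

lemma continuation_to_left_endpoint:
  fixes a b :: real
  assumes "a \<le> b" and "P b" and closed: "closed {x \<in> {a..b}. P x}"
    and persists: "\<And>x. a < x \<Longrightarrow> x \<le> b \<Longrightarrow> P x \<Longrightarrow> \<forall>\<^sub>F t in at_left x. P t"
  shows "P a"
proof -
  define c where "c = Inf {x \<in> {a..b}. P x}"
  have "c \<in> {x \<in> {a..b}. P x}"
    unfolding c_def using assms(1,2) by (intro closed_contains_Inf closed) (auto intro: bdd_belowI[of _ a])
  then have c: "a \<le> c" "c \<le> b" "P c" by auto
  have "\<not> a < c"
  proof
    assume "a < c"
    then have "\<forall>\<^sub>F t in at_left c. P t \<and> t \<in> {a<..<c}"
      using persists[OF _ c(2,3)] eventually_at_left_real by (auto intro: eventually_conj)
    then obtain t where t: "P t" "a < t" "t < c"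
      using eventually_happens'[OF trivial_limit_at_left_real] by auto
    moreover have "t \<in> {x \<in> {a..b}. P x}" using t c(2) by simp
    ultimately have "c \<le> t" unfolding c_def by (intro cInf_lower) (auto intro: bdd_belowI[of _ a])
    with t show False by simp
  qed
  with c show ?thesis by simp
qed

lemma norm_less_if_Re_cnj_mult_diff_pos:
  fixes \<xi> z :: complex
  assumes "0 < Re (cnj \<xi> * (z - \<xi>))"
  shows "cmod \<xi> < cmod z"
proof -
  have "cnj \<xi> * \<xi> = of_real ((cmod \<xi>)\<^sup>2)"
    by (metis complex_norm_square mult.commute)
  then have "Re (cnj \<xi> * (z - \<xi>)) = Re (cnj \<xi> * z) - (cmod \<xi>)\<^sup>2"
    by (simp add: right_diff_distrib)
  also have "\<dots> \<le> cmod \<xi> * (cmod z - cmod \<xi>)"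
    using complex_Re_le_cmod[of "cnj \<xi> * z"] by (simp add: norm_mult algebra_simps power2_eq_square)
  finally have "0 < cmod \<xi> * (cmod z - cmod \<xi>)"
    by (rule less_le_trans[OF assms])
  then show ?thesis
    by (simp add: zero_less_mult_iff)
qed

lemma eventually_norm_gt_at_left:
  fixes h :: "real \<Rightarrow> complex"
  assumes "((\<lambda>t. (h t - \<xi>) / (of_real t - of_real y)) \<longlongrightarrow> v) (at_left y)"
    and "Re (cnj \<xi> * v) < 0"
  shows "\<forall>\<^sub>F t in at_left y. cmod \<xi> < cmod (h t)"
proof -
  have "((\<lambda>t. Re (cnj \<xi> * ((h t - \<xi>) / (of_real t - of_real y)))) \<longlongrightarrow> Re (cnj \<xi> * v)) (at_left y)"
    using assms(1) by (intro tendsto_Re tendsto_mult tendsto_const)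
  then have "\<forall>\<^sub>F t in at_left y. Re (cnj \<xi> * ((h t - \<xi>) / (of_real t - of_real y))) < 0"
    using assms(2) by (rule order_tendstoD)
  moreover have "\<forall>\<^sub>F t in at_left y. t < y"
    by (simp add: eventually_at_filter)
  ultimately show ?thesis
  proof eventually_elim
    case (elim t)
    then have "Re (cnj \<xi> * (h t - \<xi>)) / (t - y) < 0"
      by (simp only: times_divide_eq_right Re_divide_of_real flip: of_real_diff)
    then have "0 < Re (cnj \<xi> * (h t - \<xi>))"
      using elim(2) by (simp add: divide_less_0_iff)
    then show ?case
      by (rule norm_less_if_Re_cnj_mult_diff_pos)
  qed
qed

lemma holomorphic_real_preimages_grow_at_left:
  fixes f :: "complex \<Rightarrow> complex"
  assumes holf: "f holomorphic_on S" and S: "\<xi> \<in> S" "open S"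
    and der: "(f has_field_derivative f') (at \<xi>)"
    and f\<xi>: "f \<xi> = of_real y" and outward: "Re (cnj \<xi> / f') < 0"
  shows "\<forall>\<^sub>F t in at_left y. \<exists>z\<in>S. f z = of_real t \<and> cmod \<xi> < cmod z"
proof -
  have "f' \<noteq> 0"
    using outward by auto
  obtain r where r: "r > 0" "ball \<xi> r \<subseteq> S" "open (f ` ball \<xi> r)" "inj_on f (ball \<xi> r)"
    using has_complex_derivative_locally_invertible[OF holf S] DERIV_imp_deriv[OF der] \<open>f' \<noteq> 0\<close>
    by metis
  define g where "g = the_inv_into (ball \<xi> r) f"
  have g: "g (f z) = z" if "z \<in> ball \<xi> r" for z
    unfolding g_def using r(4) that by (rule the_inv_into_f_f)
  have "(g has_field_derivative inverse f') (at (f \<xi>))"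
  proof (rule has_field_derivative_inverse_strong[OF der \<open>f' \<noteq> 0\<close> open_ball])
    show "continuous_on (ball \<xi> r) f"
      using holf r(2) by (meson holomorphic_on_imp_continuous_on holomorphic_on_subset)
  qed (use r(1) g in auto)
  then have "((\<lambda>w. (g w - \<xi>) / (w - of_real y)) \<longlongrightarrow> inverse f') (at (of_real y))"
    using g[of \<xi>] r(1) f\<xi> by (simp add: has_field_derivative_iff)
  moreover have "filterlim complex_of_real (at (of_real y)) (at_left y)"
  proof (rule filterlim_atI)
    show "((\<lambda>t. complex_of_real t) \<longlongrightarrow> of_real y) (at_left y)"
      by (intro tendsto_of_real tendsto_ident_at)
  qed (simp add: eventually_at_filter)
  ultimately have "((\<lambda>t. (g (of_real t) - \<xi>) / (of_real t - of_real y)) \<longlongrightarrow> inverse f') (at_left y)"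
    by (rule filterlim_compose)
  then have "\<forall>\<^sub>F t in at_left y. cmod \<xi> < cmod (g (of_real t))"
    by (rule eventually_norm_gt_at_left) (use outward in \<open>simp add: divide_inverse\<close>)
  moreover have "\<forall>\<^sub>F t in at_left y. of_real t \<in> f ` ball \<xi> r"
  proof (rule topological_tendstoD[OF _ r(3)])
    show "((\<lambda>t. complex_of_real t) \<longlongrightarrow> f \<xi>) (at_left y)"
      unfolding f\<xi> by (intro tendsto_of_real tendsto_ident_at)
  qed (use r(1) in simp)
  ultimately show ?thesis
  proof eventually_elim
    case (elim t)
    then obtain z where "z \<in> ball \<xi> r" "of_real t = f z"
      by blast
    with elim(1) show ?case
      using r(2) g by (intro bexI[of _ z]) auto
  qed
qed

definition reduced_char :: "nat \<Rightarrow> real \<Rightarrow> complex \<Rightarrow> complex \<Rightarrow> complex" where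
  "reduced_char m y \<mu> \<xi> = (1 - of_real y) * \<xi> ^ m - \<xi> ^ (m - 1) + of_real y * \<mu>"

definition has_outer_root :: "nat \<Rightarrow> real \<Rightarrow> complex \<Rightarrow> bool" where
  "has_outer_root m y \<mu> \<longleftrightarrow> (\<exists>\<xi>. 1 \<le> cmod \<xi> \<and> reduced_char m y \<mu> \<xi> = 0)"

definition root_parameter :: "nat \<Rightarrow> complex \<Rightarrow> complex \<Rightarrow> complex" where
  "root_parameter m \<mu> \<xi> = \<xi> ^ (m - 1) * (1 - \<xi>) / (\<mu> - \<xi> ^ m)"

(* The derivative of root_parameter m \<mu> at a point where it takes the value y; \<mu> has been
   eliminated using that equation. *)
definition root_parameter_deriv :: "nat \<Rightarrow> real \<Rightarrow> complex \<Rightarrow> complex" where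
  "root_parameter_deriv m y \<xi> =
    - of_real y * (of_nat m * (1 - of_real y) * \<xi> - of_nat (m - 1)) / (\<xi> * (1 - \<xi>))"

lemma D_eq_no_outer_root:
  assumes "1 \<le> m"
  shows "D m y = {\<mu>. \<not> has_outer_root m y \<mu>}"
proof -
  obtain k where k: "m = Suc k" using assms by (cases m) auto
  have eq: "\<xi> ^ (m + 1) - \<xi> ^ m = of_real y * \<xi> ^ (m + 1) - of_real y * \<mu> * \<xi>
      \<longleftrightarrow> \<xi> * reduced_char m y \<mu> \<xi> = 0" for \<xi> \<mu>
    unfolding reduced_char_def k by (simp add: algebra_simps)
  have "D m y = {\<mu>. \<forall>\<xi>. \<xi> * reduced_char m y \<mu> \<xi> = 0 \<longrightarrow> cmod \<xi> < 1}"
    unfolding D_def eq ..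
  also have "\<dots> = {\<mu>. \<not> has_outer_root m y \<mu>}"
    unfolding has_outer_root_def by (auto simp: not_le)
  finally show ?thesis .
qed

lemma reduced_char_root_norm_le:
  assumes "1 \<le> m" "y \<le> 0" "1 \<le> cmod \<xi>" "reduced_char m y \<mu> \<xi> = 0"
  shows "cmod \<xi> \<le> 1 - y * cmod \<mu>"
proof -
  obtain k where k: "m = Suc k" using assms(1) by (cases m) auto
  have "(1 - of_real y) * \<xi> * \<xi> ^ k = \<xi> ^ k - of_real y * \<mu>"
    using assms(4) unfolding reduced_char_def k by (simp add: algebra_simps)
  moreover have "cmod (1 - complex_of_real y) = 1 - y"
    using assms(2) by (metis abs_of_nonneg diff_ge_0_iff_ge norm_of_real of_real_1 of_real_diff order.trans zero_le_one)
  ultimately have "(1 - y) * cmod \<xi> * cmod \<xi> ^ k = cmod (\<xi> ^ k - of_real y * \<mu>)"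
    by (metis norm_mult norm_power)
  also have "\<dots> \<le> cmod \<xi> ^ k - y * cmod \<mu>"
    using assms(2) norm_triangle_ineq4[of "\<xi> ^ k" "of_real y * \<mu>"] by (simp add: norm_mult norm_power)
  also have "\<dots> \<le> cmod \<xi> ^ k * (1 - y * cmod \<mu>)"
  proof -
    have "0 \<le> (- y * cmod \<mu>) * (cmod \<xi> ^ k - 1)"
      using assms(2,3) one_le_power[of "cmod \<xi>" k] by (intro mult_nonneg_nonneg) auto
    then show ?thesis by (simp add: algebra_simps)
  qed
  finally have "cmod \<xi> ^ k * ((1 - y) * cmod \<xi>) \<le> cmod \<xi> ^ k * (1 - y * cmod \<mu>)"
    by (simp only: ac_simps)
  moreover have "0 < cmod \<xi> ^ k"
    using assms(3) by (intro zero_less_power) linarith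
  ultimately have "(1 - y) * cmod \<xi> \<le> 1 - y * cmod \<mu>"
    by (rule mult_left_le_imp_le)
  moreover have "cmod \<xi> \<le> (1 - y) * cmod \<xi>"
    using assms(2) by (simp add: mult_le_cancel_right1)
  ultimately show ?thesis by linarith
qed

lemma closed_has_outer_root:
  assumes "1 \<le> m" "b \<le> 0"
  shows "closed {y \<in> {a..b}. has_outer_root m y \<mu>}"
proof -
  define R where "R = 1 - a * cmod \<mu>"
  define K where "K = ({a..b} \<times> cball 0 R) \<inter> {p. 1 \<le> cmod (snd p)} \<inter> {p. reduced_char m (fst p) \<mu> (snd p) = 0}"
  have "continuous_on UNIV (\<lambda>p. reduced_char m (fst p) \<mu> (snd p))"
    unfolding reduced_char_def by (intro continuous_intros)
  then have "closed {p. reduced_char m (fst p) \<mu> (snd p) = 0}"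
    by (intro closed_Collect_eq continuous_on_const)
  moreover have "closed {p :: real \<times> complex. 1 \<le> cmod (snd p)}"
    by (intro closed_Collect_le continuous_intros)
  ultimately have "compact K"
    unfolding K_def by (intro compact_Int_closed compact_Times compact_Icc compact_cball)
  have "{y \<in> {a..b}. has_outer_root m y \<mu>} = fst ` K"
  proof
    show "fst ` K \<subseteq> {y \<in> {a..b}. has_outer_root m y \<mu>}"
      unfolding K_def has_outer_root_def by auto
    show "{y \<in> {a..b}. has_outer_root m y \<mu>} \<subseteq> fst ` K"
    proof
      fix y assume "y \<in> {y \<in> {a..b}. has_outer_root m y \<mu>}"
      then obtain \<xi> where y: "a \<le> y" "y \<le> b" and \<xi>: "1 \<le> cmod \<xi>" "reduced_char m y \<mu> \<xi> = 0"
        unfolding has_outer_root_def by auto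
      have "cmod \<xi> \<le> 1 - y * cmod \<mu>"
        using reduced_char_root_norm_le[OF assms(1) _ \<xi>] y assms(2) by simp
      also have "\<dots> \<le> R"
        unfolding R_def using y by (simp add: mult_right_mono)
      finally have "(y, \<xi>) \<in> K"
        unfolding K_def using y \<xi> by simp
      then show "y \<in> fst ` K" by force
    qed
  qed
  moreover have "closed (fst ` K)"
    using \<open>compact K\<close> by (intro compact_imp_closed compact_continuous_image continuous_on_fst continuous_on_id)
  ultimately show ?thesis by simp
qed

lemma reduced_char_eq_0_iff_root_parameter:
  assumes "1 \<le> m" "\<xi> ^ m \<noteq> \<mu>"
  shows "reduced_char m y \<mu> \<xi> = 0 \<longleftrightarrow> root_parameter m \<mu> \<xi> = of_real y"
proof -
  obtain k where k: "m = Suc k" using assms(1) by (cases m) auto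
  have "reduced_char m y \<mu> \<xi> = 0 \<longleftrightarrow> \<xi> ^ (m - 1) * (1 - \<xi>) = of_real y * (\<mu> - \<xi> ^ m)"
    unfolding reduced_char_def k by (simp add: algebra_simps) (rule eq_commute)
  then show ?thesis
    unfolding root_parameter_def using assms(2) by (simp add: divide_eq_eq)
qed

lemma reduced_char_root_ne:
  assumes "1 \<le> m" "\<mu> \<noteq> 1" "y \<noteq> 0" "\<xi> \<noteq> 0" "reduced_char m y \<mu> \<xi> = 0"
  shows "\<xi> \<noteq> 1" "\<xi> ^ m \<noteq> \<mu>"
proof -
  show "\<xi> \<noteq> 1"
    using assms(2,3,5) unfolding reduced_char_def by auto
  obtain k where k: "m = Suc k" using assms(1) by (cases m) auto
  show "\<xi> ^ m \<noteq> \<mu>"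
  proof
    assume "\<xi> ^ m = \<mu>"
    then have "\<xi> ^ k * (\<xi> - 1) = 0"
      using assms(5) unfolding reduced_char_def k by (simp add: algebra_simps)
    with assms(4) \<open>\<xi> \<noteq> 1\<close> show False
      by simp
  qed
qed

lemma root_parameter_has_field_derivative:
  assumes "1 \<le> m" "\<xi> \<noteq> 0" "\<xi> \<noteq> 1" "\<xi> ^ m \<noteq> \<mu>" "root_parameter m \<mu> \<xi> = of_real y"
  shows "(root_parameter m \<mu> has_field_derivative root_parameter_deriv m y \<xi>) (at \<xi>)"
proof -
  obtain k where k: "m = Suc k" using assms(1) by (cases m) auto
  define dN where "dN = of_nat k * \<xi> ^ (k - 1) * (1 - \<xi>) - \<xi> ^ k"
  define Dn where "Dn = \<mu> - \<xi> ^ m"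
  have "Dn \<noteq> 0"
    using assms(4) unfolding Dn_def by simp
  have root: "\<xi> ^ k * (1 - \<xi>) = of_real y * Dn"
    using assms(5) \<open>Dn \<noteq> 0\<close> unfolding root_parameter_def Dn_def k by (simp add: divide_eq_eq)
  have num: "((\<lambda>z. z ^ k * (1 - z)) has_field_derivative dN) (at \<xi>)"
    unfolding dN_def by (auto intro!: derivative_eq_intros simp: algebra_simps)
  have den: "((\<lambda>z. \<mu> - z ^ m) has_field_derivative - (of_nat m * \<xi> ^ (m - 1))) (at \<xi>)"
    by (auto intro!: derivative_eq_intros)
  have quotient: "(root_parameter m \<mu> has_field_derivative
      (dN * Dn - \<xi> ^ k * (1 - \<xi>) * - (of_nat m * \<xi> ^ k)) / (Dn * Dn)) (at \<xi>)"
    using DERIV_divide[OF num den] \<open>Dn \<noteq> 0\<close> unfolding root_parameter_def Dn_def k by simp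
  have "(dN * Dn - \<xi> ^ k * (1 - \<xi>) * - (of_nat m * \<xi> ^ k)) / (Dn * Dn)
      = (\<xi> * dN + of_real y * of_nat m * \<xi> * \<xi> ^ k) / (\<xi> * Dn)"
    unfolding root using \<open>Dn \<noteq> 0\<close> assms(2) by (simp add: field_simps)
  also have "\<xi> * dN = \<xi> ^ k * (of_nat k * (1 - \<xi>) - \<xi>)"
    unfolding dN_def using assms(2) by (cases k) (simp_all add: algebra_simps)
  also have "(\<xi> ^ k * (of_nat k * (1 - \<xi>) - \<xi>) + of_real y * of_nat m * \<xi> * \<xi> ^ k) / (\<xi> * Dn)
      = \<xi> ^ k / Dn * (of_nat k * (1 - \<xi>) - \<xi> + of_real y * of_nat m * \<xi>) / \<xi>"
    using assms(2) \<open>Dn \<noteq> 0\<close> by (simp add: field_simps)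
  also have "\<xi> ^ k / Dn = of_real y / (1 - \<xi>)"
    using root \<open>Dn \<noteq> 0\<close> assms(3) by (simp add: field_simps)
  also have "of_real y / (1 - \<xi>) * (of_nat k * (1 - \<xi>) - \<xi> + of_real y * of_nat m * \<xi>) / \<xi>
      = root_parameter_deriv m y \<xi>"
    using assms(2,3) unfolding root_parameter_deriv_def k by (simp add: field_simps)
  finally show ?thesis
    using quotient by simp
qed

lemma Re_one_minus_mult_cnj_neg:
  fixes A B :: real and z :: complex
  assumes "0 \<le> B" "B < A" "1 \<le> cmod z" "z \<noteq> 1"
  shows "Re ((1 - z) * cnj (of_real A * z - of_real B)) < 0"
proof -
  define r where "r = cmod z"
  have "Re ((1 - z) * cnj (of_real A * z - of_real B)) = (A + B) * Re z - A * r\<^sup>2 - B"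
    unfolding r_def cmod_power2 by (simp add: algebra_simps power2_eq_square)
  moreover have "(A + B) * Re z - A * r\<^sup>2 - B < 0"
  proof (cases "r = 1")
    case True
    have "Re z \<noteq> 1"
    proof
      assume "Re z = 1"
      then have "Im z = 0"
        using True unfolding r_def cmod_def by simp
      with \<open>Re z = 1\<close> \<open>z \<noteq> 1\<close> show False
        by (simp add: complex_eq_iff)
    qed
    then have "Re z < 1"
      using complex_Re_le_cmod[of z] True unfolding r_def by linarith
    then have "(A + B) * (Re z - 1) < 0"
      using assms(1,2) by (intro mult_pos_neg) simp_all
    then show ?thesis
      using True by (simp add: algebra_simps)
  next
    case False
    then have "1 < r"
      using assms(3) unfolding r_def by simp
    have "(A + B) * Re z \<le> (A + B) * r"
      using complex_Re_le_cmod[of z] assms(1,2) unfolding r_def by (simp add: mult_left_mono)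
    moreover have "A \<le> A * r"
      using \<open>1 < r\<close> assms(1,2) mult_left_mono[of 1 r A] by simp
    then have "0 < (r - 1) * (A * r - B)"
      using \<open>1 < r\<close> assms(2) by (intro mult_pos_pos) simp_all
    ultimately show ?thesis
      by (simp add: algebra_simps power2_eq_square)
  qed
  ultimately show ?thesis by simp
qed

lemma Re_cnj_div_root_parameter_deriv_neg:
  assumes "1 \<le> m" "y < 0" "1 \<le> cmod \<xi>" "\<xi> \<noteq> 1"
  shows "Re (cnj \<xi> / root_parameter_deriv m y \<xi>) < 0"
proof -
  define A B where "A = real m * (1 - y)" and "B = real m - 1"
  define d where "d = of_real A * \<xi> - of_real B"
  have "0 \<le> B"
    unfolding B_def using assms(1) by simp
  have "real m * y < 0"
    using assms(1,2) by (simp add: mult_pos_neg)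
  then have "B < A"
    unfolding A_def B_def by (simp add: algebra_simps)
  have "d \<noteq> 0"
  proof
    assume "d = 0"
    then have "cmod (of_real A * \<xi>) = cmod (of_real B :: complex)"
      unfolding d_def by simp
    then have "A * cmod \<xi> = B"
      using \<open>0 \<le> B\<close> \<open>B < A\<close> by (simp add: norm_mult)
    moreover have "A \<le> A * cmod \<xi>"
      using assms(3) \<open>0 \<le> B\<close> \<open>B < A\<close> mult_left_mono[of 1 "cmod \<xi>" A] by simp
    ultimately show False
      using \<open>B < A\<close> by simp
  qed
  have \<xi>0: "\<xi> \<noteq> 0"
    using assms(3) by auto
  have "of_nat m * (1 - of_real y) * \<xi> - of_nat (m - 1) = d"
    unfolding d_def A_def B_def using assms(1) by (simp add: of_nat_diff)
  then have "cnj \<xi> / root_parameter_deriv m y \<xi>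
      = (cnj \<xi> * \<xi>) * ((1 - \<xi>) * cnj d) / (- of_real y * (d * cnj d))"
    using \<xi>0 assms(2,4) \<open>d \<noteq> 0\<close> unfolding root_parameter_deriv_def by (simp add: field_simps)
  also have "\<dots> = of_real ((cmod \<xi>)\<^sup>2 / (- y * (cmod d)\<^sup>2)) * ((1 - \<xi>) * cnj d)"
    by (simp only: complex_norm_square[symmetric] mult.commute[of "cnj \<xi>"]) simp
  finally have Re_eq: "Re (cnj \<xi> / root_parameter_deriv m y \<xi>)
      = (cmod \<xi>)\<^sup>2 / (- y * (cmod d)\<^sup>2) * Re ((1 - \<xi>) * cnj d)"
    by simp
  have "0 < (cmod \<xi>)\<^sup>2 / (- y * (cmod d)\<^sup>2)"
    using \<xi>0 \<open>d \<noteq> 0\<close> assms(2) by (intro divide_pos_pos mult_pos_pos) simp_all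
  moreover have "Re ((1 - \<xi>) * cnj d) < 0"
    unfolding d_def using \<open>0 \<le> B\<close> \<open>B < A\<close> assms(3,4) by (rule Re_one_minus_mult_cnj_neg)
  ultimately show ?thesis
    unfolding Re_eq by (rule mult_pos_neg)
qed

lemma outer_root_persists_at_left:
  assumes "1 \<le> m" "\<mu> \<noteq> 1" "y < 0" "has_outer_root m y \<mu>"
  shows "\<forall>\<^sub>F t in at_left y. has_outer_root m t \<mu>"
proof -
  obtain \<xi> where \<xi>: "1 \<le> cmod \<xi>" "reduced_char m y \<mu> \<xi> = 0"
    using assms(4) unfolding has_outer_root_def by blast
  have "\<xi> \<noteq> 0"
    using \<xi>(1) by auto
  then have "\<xi> \<noteq> 1" "\<xi> ^ m \<noteq> \<mu>"
    using reduced_char_root_ne[OF assms(1,2) _ _ \<xi>(2)] assms(3) by simp_all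
  define S where "S = {z. z ^ m \<noteq> \<mu>}"
  have "open S"
    unfolding S_def by (intro open_Collect_neq continuous_intros)
  have holo: "root_parameter m \<mu> holomorphic_on S"
    unfolding root_parameter_def S_def by (intro holomorphic_intros) auto
  have "\<xi> \<in> S"
    using \<open>\<xi> ^ m \<noteq> \<mu>\<close> unfolding S_def by simp
  have root: "root_parameter m \<mu> \<xi> = of_real y"
    using \<xi>(2) reduced_char_eq_0_iff_root_parameter[OF assms(1) \<open>\<xi> ^ m \<noteq> \<mu>\<close>] by simp
  have der: "(root_parameter m \<mu> has_field_derivative root_parameter_deriv m y \<xi>) (at \<xi>)"
    using assms(1) \<open>\<xi> \<noteq> 0\<close> \<open>\<xi> \<noteq> 1\<close> \<open>\<xi> ^ m \<noteq> \<mu>\<close> root by (rule root_parameter_has_field_derivative)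
  have "Re (cnj \<xi> / root_parameter_deriv m y \<xi>) < 0"
    using assms(1,3) \<xi>(1) \<open>\<xi> \<noteq> 1\<close> by (rule Re_cnj_div_root_parameter_deriv_neg)
  with holo \<open>\<xi> \<in> S\<close> \<open>open S\<close> der root
  have "\<forall>\<^sub>F t in at_left y. \<exists>z\<in>S. root_parameter m \<mu> z = of_real t \<and> cmod \<xi> < cmod z"
    by (rule holomorphic_real_preimages_grow_at_left)
  then show ?thesis
  proof eventually_elim
    case (elim t)
    then obtain z where z: "z ^ m \<noteq> \<mu>" "root_parameter m \<mu> z = of_real t" "cmod \<xi> < cmod z"
      unfolding S_def by blast
    then have "reduced_char m t \<mu> z = 0"
      using reduced_char_eq_0_iff_root_parameter[OF assms(1)] by blast
    moreover have "1 \<le> cmod z"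
      using \<xi>(1) z(3) by linarith
    ultimately show ?case
      unfolding has_outer_root_def by blast
  qed
qed

lemma has_outer_root_antimono:
  assumes "1 \<le> m" "y1 \<le> y2" "y2 < 0" "has_outer_root m y2 \<mu>"
  shows "has_outer_root m y1 \<mu>"
proof (cases "\<mu> = 1")
  case True
  then have "reduced_char m y1 \<mu> 1 = 0"
    unfolding reduced_char_def by simp
  then show ?thesis
    unfolding has_outer_root_def by (intro exI[of _ 1]) simp
next
  case False
  show ?thesis
  proof (rule continuation_to_left_endpoint[where P = "\<lambda>y. has_outer_root m y \<mu>"])
    show "closed {y \<in> {y1..y2}. has_outer_root m y \<mu>}"
      using assms(1,3) by (intro closed_has_outer_root) simp_all
    show "\<forall>\<^sub>F t in at_left y. has_outer_root m t \<mu>" if "y1 < y" "y \<le> y2" "has_outer_root m y \<mu>" for y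
      using assms(1,3) False that by (intro outer_root_persists_at_left) simp_all
  qed (use assms in simp_all)
qed

theorem mainTheorem9:
  fixes m :: nat and y1 y2 :: real
  assumes "m \<ge> 1" and "y1 < y2" and "y2 < 0"
  shows "D m y1 \<subseteq> D m y2"
  using has_outer_root_antimono[OF assms(1) less_imp_le[OF assms(2)] assms(3)]
  unfolding D_eq_no_outer_root[OF assms(1)] by blast

end
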